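(* Let $\alpha:[0,1]\to\mathrm{Mult}_n(\mathbb{C})$ be a path and let $\widetilde\alpha(0)\in\mathbb{C}^n$ satisfy $\mathrm{Mult}(\widetilde\alpha(0))=\alpha(0)$. If $\alpha$ has weakly decreasing shape, then there exist at most $n!$ paths $\widetilde\alpha:[0,1]\to\mathbb{C}^n$ starting at $\widetilde\alpha(0)$ with $\alpha=\mathrm{Mult}\circ\widetilde\alpha$.
   Context: $\mathrm{Mult}_n(\mathbb{C})=\mathbb{C}^n/\mathrm{Sym}_n$ is the space of $n$-element multisets in $\mathbb{C}$ and $\mathrm{Mult}$ the quotient map. The shape of a multiset is the integer partition of $n$ formed by its multiplicities; partitions are ordered by $\lambda\le\mu$ iff $\mu$ is obtained by summing blocks of a partition of the parts of $\lambda$. A path has weakly decreasing shape if $s\le t$ implies $\mathrm{Shape}(\alpha(s))\ge\mathrm{Shape}(\alpha(t))$. *)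

theory Defs
  imports "HOL-Analysis.Analysis" "HOL-Library.Multiset"
begin

definition Mult :: "complex^'n \<Rightarrow> complex multiset" where
  "Mult x = image_mset (\<lambda>i. x $ i) (mset_set (UNIV :: 'n set))"

text \<open>Mult_n(C) with the quotient topology induced by Mult.\<close>
definition mult_open :: "'n::finite itself \<Rightarrow> complex multiset set \<Rightarrow> bool" where
  "mult_open _ U \<longleftrightarrow> U \<subseteq> range (Mult :: complex^'n \<Rightarrow> complex multiset)
      \<and> open ((Mult :: complex^'n \<Rightarrow> complex multiset) -` U)"

definition mult_top :: "'n::finite itself \<Rightarrow> complex multiset topology" where
  "mult_top _ = topology (mult_open TYPE('n))"

lemma istopology_mult_open: "istopology (mult_open TYPE('n::finite))"
  unfolding istopology_def mult_open_def
  by (auto simp: open_Int vimage_Union intro!: open_Union)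

definition Shape :: "'a multiset \<Rightarrow> nat multiset" where
  "Shape M = image_mset (count M) (mset_set (set_mset M))"

definition partition_le :: "nat multiset \<Rightarrow> nat multiset \<Rightarrow> bool" where
  "partition_le lam mu \<longleftrightarrow> (\<exists>P :: nat multiset multiset.
      (\<forall>B \<in># P. B \<noteq> {#}) \<and> sum_mset P = lam \<and> image_mset sum_mset P = mu)"

definition weakly_decreasing_shape :: "(real \<Rightarrow> 'a multiset) \<Rightarrow> bool" where
  "weakly_decreasing_shape \<alpha> \<longleftrightarrow>
     (\<forall>s\<in>{0..1}. \<forall>t\<in>{0..1}. s \<le> t \<longrightarrow> partition_le (Shape (\<alpha> t)) (Shape (\<alpha> s)))"

end

theory Submission
  imports Defs "HOL-Combinatorics.Multiset_Permutations"
begin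

text \<open>Along a path of weakly decreasing shape the number of distinct points of \<open>\<alpha> t\<close> never
decreases, so points may split but never merge as time runs forward. For a continuous lift
this means that just before any time \<open>s\<close> its coordinates coincide exactly as they do at \<open>s\<close>:
by continuity they can only coincide less, and coinciding strictly less would mean more
distinct points than at \<open>s\<close>. Consequently the set of times at which two lifts agree spreads
to the left from every point, and being closed it contains everything before time 1 once it
contains 1. A lift is thus determined by its endpoint, an ordering of the \<open>n\<close> points of
\<open>\<alpha> 1\<close>, of which there are at most \<open>n!\<close>.\<close>

lemma eventually_components_ne:
  fixes g h :: "'b::topological_space \<Rightarrow> 'a::real_normed_vector^'n"
  assumes "continuous_on S g" "continuous_on S h" "s \<in> S"
  shows "\<forall>\<^sub>F u in at s within S. \<forall>k l. g s $ k \<noteq> h s $ l \<longrightarrow> g u $ k \<noteq> h u $ l"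
proof -
  have "\<forall>\<^sub>F u in at s within S. g s $ k \<noteq> h s $ l \<longrightarrow> g u $ k \<noteq> h u $ l" for k l
  proof (cases "g s $ k = h s $ l")
    case False
    have "((\<lambda>u. g u $ k - h u $ l) \<longlongrightarrow> g s $ k - h s $ l) (at s within S)"
      using assms by (intro tendsto_intros) (auto simp: continuous_on_def)
    then have "\<forall>\<^sub>F u in at s within S. g u $ k - h u $ l \<noteq> 0"
      using False by (intro tendsto_imp_eventually_ne) auto
    then show ?thesis by eventually_elim auto
  qed auto
  then show ?thesis by (intro eventually_all_finite)
qed

lemma at_left_le_at_within_Icc:
  fixes s :: real
  assumes "a < s" "s \<le> b"
  shows "at_left s \<le> at s within {a..b}"
  using at_within_Icc_at_left[OF \<open>a < s\<close>] at_le[of "{a..s}" "{a..b}" s] \<open>s \<le> b\<close> by simp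

lemma eq_iff_eq_if_card_range_le:
  fixes f :: "'i::finite \<Rightarrow> 'a" and g :: "'i \<Rightarrow> 'b"
  assumes factor: "\<And>k l. f k = f l \<Longrightarrow> g k = g l"
    and card: "card (range f) \<le> card (range g)"
  shows "f i = f j \<longleftrightarrow> g i = g j"
proof
  assume "g i = g j"
  define \<phi> where "\<phi> v = g (inv f v)" for v
  have \<phi>_f: "\<phi> (f k) = g k" for k
    unfolding \<phi>_def by (rule factor) (simp add: f_inv_into_f)
  then have "\<phi> ` range f = range g"
    by (simp add: image_image)
  then have "card (\<phi> ` range f) = card (range f)"
    using card card_image_le[of "range f" \<phi>] by simp
  then have "inj_on \<phi> (range f)"
    by (simp add: eq_card_imp_inj_on)
  then show "f i = f j"
    using \<phi>_f[of i] \<phi>_f[of j] \<open>g i = g j\<close> by (metis inj_onD rangeI)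
qed (rule factor)

lemma closed_backward_induct_real:
  fixes a b :: real
  assumes "closed Z" "b \<in> Z" "a \<le> b"
    and step: "\<And>s. s \<in> Z \<Longrightarrow> a < s \<Longrightarrow> s \<le> b \<Longrightarrow> \<forall>\<^sub>F u in at_left s. u \<in> Z"
  shows "a \<in> Z"
proof (rule ccontr)
  assume "a \<notin> Z"
  define m where "m = Inf (Z \<inter> {a..b})"
  have bdd: "bdd_below (Z \<inter> {a..b})"
    by (rule bdd_belowI[of _ a]) auto
  have "m \<in> Z \<inter> {a..b}"
    unfolding m_def using assms bdd by (intro closed_contains_Inf) auto
  with \<open>a \<notin> Z\<close> have "a < m" "m \<in> Z" "m \<le> b"
    by (auto simp: less_le)
  then have "\<forall>\<^sub>F u in at_left m. u \<in> Z \<and> u \<in> {a<..<m}"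
    using step eventually_at_left_real[OF \<open>a < m\<close>] by (intro eventually_conj)
  then obtain u where "u \<in> Z" "a < u" "u < m"
    using eventually_happens'[OF trivial_limit_at_left_real] by auto
  moreover have "m \<le> u"
    unfolding m_def using bdd \<open>u \<in> Z\<close> \<open>a < u\<close> \<open>u < m\<close> \<open>m \<le> b\<close>
    by (intro cInf_lower) auto
  ultimately show False by simp
qed

lemma eventually_at_left_same_coincidences:
  fixes g :: "real \<Rightarrow> 'a::real_normed_vector^'n"
  assumes cont: "continuous_on {a..b} g"
    and mono: "mono_on {a..b} (\<lambda>t. card (range (\<lambda>k. g t $ k)))"
    and "a < s" "s \<le> b"
  shows "\<forall>\<^sub>F u in at_left s. \<forall>k l. g u $ k = g u $ l \<longleftrightarrow> g s $ k = g s $ l"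
proof -
  have "\<forall>\<^sub>F u in at_left s. u \<in> {a<..<s} \<and> (\<forall>k l. g s $ k \<noteq> g s $ l \<longrightarrow> g u $ k \<noteq> g u $ l)"
    unfolding eventually_conj_iff
    using eventually_at_left_real[OF \<open>a < s\<close>] assms
      filter_leD[OF at_left_le_at_within_Icc eventually_components_ne[OF cont cont]]
    by simp
  then show ?thesis
  proof eventually_elim
    case (elim u)
    then have "card (range (\<lambda>k. g u $ k)) \<le> card (range (\<lambda>k. g s $ k))"
      using assms by (auto intro: mono_onD[OF mono])
    with elim show ?case
      using eq_iff_eq_if_card_range_le[of "\<lambda>k. g u $ k" "\<lambda>k. g s $ k"] by blast
  qed
qed

lemma eventually_at_left_eq_if_eq:
  fixes g h :: "real \<Rightarrow> 'a::real_normed_vector^'n"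
  assumes cont_g: "continuous_on {a..b} g" and cont_h: "continuous_on {a..b} h"
    and mono: "mono_on {a..b} (\<lambda>t. card (range (\<lambda>k. g t $ k)))"
    and same_range: "\<And>t. t \<in> {a..b} \<Longrightarrow> range (\<lambda>k. h t $ k) = range (\<lambda>k. g t $ k)"
    and "a < s" "s \<le> b" "g s = h s"
  shows "\<forall>\<^sub>F u in at_left s. g u = h u"
proof -
  have "\<forall>\<^sub>F u in at_left s. u \<in> {a<..<s}
      \<and> (\<forall>k l. g s $ k \<noteq> h s $ l \<longrightarrow> g u $ k \<noteq> h u $ l)
      \<and> (\<forall>k l. g u $ k = g u $ l \<longleftrightarrow> g s $ k = g s $ l)"
    using eventually_at_left_real[OF \<open>a < s\<close>]
      filter_leD[OF at_left_le_at_within_Icc[OF \<open>a < s\<close> \<open>s \<le> b\<close>]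
        eventually_components_ne[OF cont_g cont_h]]
      eventually_at_left_same_coincidences[OF cont_g mono \<open>a < s\<close> \<open>s \<le> b\<close>] assms
    unfolding eventually_conj_iff by simp
  then show ?thesis
  proof eventually_elim
    case (elim u)
    have "g u $ l = h u $ l" for l
    proof -
      have "u \<in> {a..b}"
        using elim \<open>s \<le> b\<close> by auto
      then obtain k where k: "g u $ k = h u $ l"
        using same_range by (metis rangeE rangeI)
      then have "g s $ k = g s $ l"
        using elim \<open>g s = h s\<close> by auto
      with elim k show ?thesis
        by metis
    qed
    then show ?case
      by (simp add: vec_eq_iff)
  qed
qed

lemma lifts_eq_if_eq_at_right_end:
  fixes g h :: "real \<Rightarrow> 'a::real_normed_vector^'n"
  assumes cont_g: "continuous_on {a..b} g" and cont_h: "continuous_on {a..b} h"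
    and mono: "mono_on {a..b} (\<lambda>t. card (range (\<lambda>k. g t $ k)))"
    and same_range: "\<And>t. t \<in> {a..b} \<Longrightarrow> range (\<lambda>k. h t $ k) = range (\<lambda>k. g t $ k)"
    and "g b = h b" "t \<in> {a..b}"
  shows "g t = h t"
proof -
  let ?Z = "{u \<in> {t..b}. g u - h u = 0}"
  have "t \<in> ?Z"
  proof (rule closed_backward_induct_real)
    have "continuous_on {t..b} (\<lambda>u. g u - h u)"
      using \<open>t \<in> {a..b}\<close> by (intro continuous_intros continuous_on_subset[OF cont_g]
          continuous_on_subset[OF cont_h]) auto
    then show "closed ?Z"
      by (rule continuous_closed_preimage_constant) simp
    show "b \<in> ?Z" "t \<le> b"
      using assms by auto
  next
    fix s assume s: "s \<in> ?Z" "t < s" "s \<le> b"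
    then have "\<forall>\<^sub>F u in at_left s. g u = h u"
      using \<open>t \<in> {a..b}\<close>
      by (intro eventually_at_left_eq_if_eq[OF cont_g cont_h mono same_range]) auto
    moreover have "\<forall>\<^sub>F u in at_left s. u \<in> {t<..<s}"
      using eventually_at_left_real[OF \<open>t < s\<close>] .
    ultimately show "\<forall>\<^sub>F u in at_left s. u \<in> ?Z"
      by eventually_elim (use \<open>s \<le> b\<close> in auto)
  qed
  then show ?thesis
    by simp
qed

lemma size_le_size_sum_mset:
  "\<forall>B\<in>#P. B \<noteq> {#} \<Longrightarrow> size P \<le> size (sum_mset (P :: 'a multiset multiset))"
proof (induction P)
  case (add B P)
  then have "size B \<ge> 1"
    by (cases B) auto
  with add show ?case
    by auto
qed simp

lemma partition_le_size_le: "partition_le lam mu \<Longrightarrow> size mu \<le> size lam"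
  unfolding partition_le_def using size_le_size_sum_mset by fastforce

lemma size_Shape: "size (Shape M) = card (set_mset M)"
  by (simp add: Shape_def)

lemma weakly_decreasing_shape_imp_mono_on:
  "weakly_decreasing_shape \<alpha> \<Longrightarrow> mono_on {0..1} (\<lambda>t. card (set_mset (\<alpha> t)))"
  unfolding weakly_decreasing_shape_def
  by (intro mono_onI) (metis partition_le_size_le size_Shape)

lemma set_mset_Mult: "set_mset (Mult x) = range (\<lambda>i. x $ i)"
  by (simp add: Mult_def)

lemma size_Mult: "size (Mult (x :: complex^'n)) = CARD('n)"
  by (simp add: Mult_def)

lemma
  shows finite_Mult_fibre: "finite {x :: complex^'n. Mult x = M}"
    and card_Mult_fibre_le: "card {x :: complex^'n. Mult x = M} \<le> fact CARD('n)"
proof -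
  let ?F = "{x :: complex^'n. Mult x = M}"
  obtain L :: "'n list" where L: "set L = UNIV" "distinct L"
    using finite_distinct_list[of "UNIV :: 'n set"] by auto
  define components where "components x = map (\<lambda>i. x $ i) L" for x :: "complex^'n"
  have inj: "inj_on components ?F"
    using L(1) by (intro inj_onI) (auto simp: components_def vec_eq_iff map_eq_conv)
  have "Mult x = mset (components x)" for x
    unfolding Mult_def components_def by (metis L mset_map mset_set_set)
  then have sub: "components ` ?F \<subseteq> permutations_of_multiset M"
    by (auto simp: permutations_of_multiset_def)
  show "finite ?F"
    using inj_on_finite[OF inj sub finite_permutations_of_multiset] .
  show "card ?F \<le> fact CARD('n)"
  proof (cases "?F = {}")
    case False
    then have "size M = CARD('n)"
      using size_Mult by auto
    have "card ?F \<le> card (permutations_of_multiset M)"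
      using card_inj_on_le[OF inj sub finite_permutations_of_multiset] .
    also have "\<dots> \<le> fact (size M)"
      by (simp add: card_permutations_of_multiset(1) div_le_dividend)
    finally show ?thesis
      using \<open>size M = CARD('n)\<close> by simp
  qed simp
qed

lemma Mult_lifts_eq_if_eq_at_1:
  fixes g h :: "real \<Rightarrow> complex^'n"
  assumes "weakly_decreasing_shape \<alpha>"
    and "continuous_on {0..1} g" "continuous_on {0..1} h"
    and lift_g: "\<forall>t\<in>{0..1}. Mult (g t) = \<alpha> t" and lift_h: "\<forall>t\<in>{0..1}. Mult (h t) = \<alpha> t"
    and "g 1 = h 1" "t \<in> {0..1}"
  shows "g t = h t"
proof (rule lifts_eq_if_eq_at_right_end)
  show "mono_on {0..1} (\<lambda>t. card (range (\<lambda>k. g t $ k)))"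
    using weakly_decreasing_shape_imp_mono_on[OF assms(1)] lift_g
    by (simp add: mono_on_def flip: set_mset_Mult)
  show "range (\<lambda>k. h u $ k) = range (\<lambda>k. g u $ k)" if "u \<in> {0..1}" for u
    using lift_g lift_h that by (simp flip: set_mset_Mult)
qed (use assms in auto)

theorem corollary8p4:
  fixes \<alpha> :: "real \<Rightarrow> complex multiset" and x0 :: "complex^'n"
  assumes "continuous_map (top_of_set {0..1}) (mult_top TYPE('n)) \<alpha>"
    and "Mult x0 = \<alpha> 0"
    and "weakly_decreasing_shape \<alpha>"
  shows "finite {g \<in> extensional {0..1}. continuous_on {0..1} g \<and> g 0 = x0
                    \<and> (\<forall>t\<in>{0..1}. Mult (g t) = \<alpha> t)}
    \<and> card {g \<in> extensional {0..1}. continuous_on {0..1} g \<and> g 0 = x0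
                    \<and> (\<forall>t\<in>{0..1}. Mult (g t) = \<alpha> t)} \<le> fact CARD('n)"
proof -
  let ?lifts = "{g \<in> extensional {0..1}. continuous_on {0..1} g \<and> g 0 = x0
                    \<and> (\<forall>t\<in>{0..1}. Mult (g t) = \<alpha> t)}"
  have inj: "inj_on (\<lambda>g. g 1) ?lifts"
  proof (rule inj_onI)
    fix g h assume "g \<in> ?lifts" "h \<in> ?lifts" "g 1 = h 1"
    then show "g = h"
      by (auto intro!: extensionalityI Mult_lifts_eq_if_eq_at_1[OF assms(3)])
  qed
  have sub: "(\<lambda>g. g 1) ` ?lifts \<subseteq> {x. Mult x = \<alpha> 1}"
    by auto
  show ?thesis
    using inj_on_finite[OF inj sub finite_Mult_fibre]
      card_inj_on_le[OF inj sub finite_Mult_fibre] card_Mult_fibre_le[of "\<alpha> 1", where 'n = 'n]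
    by simp
qed

end
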